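(* Let $2\le m\le n$ be natural numbers with $n-m=k(m-1)$ for a natural number $k$, and let $l$ be a positive integer with $l\equiv m\pmod{m-1}$. Let $P\subset a_{m-1}\{a_0,\dots,a_{m-1}\}^*$ be an $l$-element set such that $\{w: a_{m-1}w\in P\}$ is a complete prefix code over the alphabet $\{a_0,\dots,a_{m-1}\}$, with its elements listed as $p_l<_{dict}p_{l-1}<_{dict}\dots<_{dict}p_1$, and let $1\le i\le l$. Then the successors $(p_i)'_1,\dots,(p_i)'_k$ (with respect to $P$) are well defined. Moreover, letting $\widetilde{P}=(P\setminus\{p_i\})\cup\{p_ia_0,\dots,p_ia_{m-1}\}$, the successors with respect to $\widetilde{P}$ of the new elements are: for $1\le j\le m-1$ and $1\le r\le k$, $$(p_ia_j)'_r=p_i\,a_{m+(m-1-j)k+r-1},$$ (so $(p_ia_{m-1})'_1=p_ia_m,\dots,(p_ia_{m-1})'_k=p_ia_{m+k-1}$, $(p_ia_{m-2})'_1=p_ia_{m+k}$, ..., $(p_ia_1)'_k=p_ia_{n-1}$), and for $1\le r\le k$, $$(p_ia_0)'_r=(p_i)'_r,$$ where the right-hand side is the $r$-th successor of $p_i$ with respect to $P$.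
   Context: Let $\mathcal{A}_n=\{a_0,a_1,\dots,a_{n-1}\}$ be an alphabet of $n$ distinct letters with linear order $a_0<a_1<\dots<a_{n-1}$, containing $\mathcal{A}_m=\{a_0,\dots,a_{m-1}\}$, and let $\mathcal{A}_{m,n}=\{a_m,\dots,a_{n-1}\}$. Words are finite strings of letters (including the empty word $\varepsilon$), and juxtaposition denotes concatenation. $u<_{pref}v$ means $v=uw$ for a nonempty word $w$. Dictionary order: $u\le_{dict}v$ iff $u$ is a prefix of $v$, or $u=p\alpha s$, $v=p\beta t$ with letters $\alpha<\beta$. For a finite set $P$ of words, $\operatorname{spref}(P)=\{w: \exists p\in P,\ w<_{pref}p\}$ (strict prefixes, including $\varepsilon$), and $\operatorname{spref}(P)\mathcal{A}_{m,n}=\{xa_j: x\in\operatorname{spref}(P),\ a_j\in\mathcal{A}_{m,n}\}$. Successors: let $P\subset a_{m-1}\{a_0,\dots,a_{m-1}\}^*$ be as in the claim, with elements $p_1,\dots,p_l$ listed in reverse dictionary order ($p_1$ the largest). The successors $(p_s)'_r$ ($1\le s\le l$, $1\le r\le k$) are defined inductively in the order $(p_1)'_1,\dots,(p_1)'_k,(p_2)'_1,\dots,(p_2)'_k,\dots,(p_l)'_k$: writing $P_{s,r-1}$ for the set of all successors already defined before $(p_s)'_r$ in this order, $$(p_s)'_r=\min{}_{\le_{dict}}\{xa_j\in\operatorname{spref}(P)\mathcal{A}_{m,n}:\ p_s<_{dict}xa_j,\ xa_j\notin P_{s,r-1}\}.$$ "Well defined" means the set over which the minimum is taken is nonempty at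 each step. Successors with respect to $\widetilde{P}$ are defined the same way with $\widetilde{P}$ (listed in its own reverse dictionary order) in place of $P$. *)

theory Defs
  imports Main
begin

text \<open>Letters a_j are represented by natural numbers j; words are nat lists;
  juxtaposition is list append.\<close>

definition is_prefix :: "nat list \<Rightarrow> nat list \<Rightarrow> bool" where
  "is_prefix u v \<longleftrightarrow> (\<exists>w. v = u @ w)"

definition strict_prefix :: "nat list \<Rightarrow> nat list \<Rightarrow> bool" where
  "strict_prefix u v \<longleftrightarrow> (\<exists>w. w \<noteq> [] \<and> v = u @ w)"

definition dict_le :: "nat list \<Rightarrow> nat list \<Rightarrow> bool" where
  "dict_le u v \<longleftrightarrow> is_prefix u v \<or>
     (\<exists>p \<alpha> s \<beta> t. u = p @ [\<alpha>] @ s \<and> v = p @ [\<beta>] @ t \<and> \<alpha> < \<beta>)"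

definition dict_less :: "nat list \<Rightarrow> nat list \<Rightarrow> bool" where
  "dict_less u v \<longleftrightarrow> dict_le u v \<and> u \<noteq> v"

definition words :: "nat \<Rightarrow> nat list set" where
  "words m = {w. set w \<subseteq> {0..<m}}"

definition prefix_code :: "nat \<Rightarrow> nat list set \<Rightarrow> bool" where
  "prefix_code m C \<longleftrightarrow> C \<subseteq> words m \<and> (\<forall>u\<in>C. \<forall>v\<in>C. \<not> strict_prefix u v)"

definition complete_prefix_code :: "nat \<Rightarrow> nat list set \<Rightarrow> bool" where
  "complete_prefix_code m C \<longleftrightarrow> prefix_code m C \<and>
     (\<forall>w\<in>words m. \<exists>c\<in>C. is_prefix c w \<or> is_prefix w c)"

definition spref :: "nat list set \<Rightarrow> nat list set" where
  "spref P = {w. \<exists>p\<in>P. strict_prefix w p}"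

definition cands :: "nat list set \<Rightarrow> nat \<Rightarrow> nat \<Rightarrow> nat list set" where
  "cands P m n = {x @ [j] | x j. x \<in> spref P \<and> m \<le> j \<and> j < n}"

text \<open>Position of q in Q listed in reverse dictionary order (largest = position 1),
  and the element at position s.\<close>
definition pos :: "nat list set \<Rightarrow> nat list \<Rightarrow> nat" where
  "pos Q q = card {x\<in>Q. dict_less q x} + 1"

definition pel :: "nat list set \<Rightarrow> nat \<Rightarrow> nat list" where
  "pel Q s = (THE p. p \<in> Q \<and> pos Q p = s)"

definition dict_min :: "nat list set \<Rightarrow> nat list" where
  "dict_min C = (THE c. c \<in> C \<and> (\<forall>d\<in>C. dict_le c d))"

text \<open>The first t successors in the order (p_1)'_1,...,(p_1)'_k,(p_2)'_1,...;
  None if some minimum is taken over an empty set (not well defined).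
  Step number t (0-based) defines (p_s)'_r with s = t div k + 1, r = t mod k + 1.\<close>
fun succ_opt :: "nat list set \<Rightarrow> nat \<Rightarrow> nat \<Rightarrow> nat \<Rightarrow> nat \<Rightarrow> nat list list option" where
  "succ_opt P m n k 0 = Some []"
| "succ_opt P m n k (Suc t) =
     (case succ_opt P m n k t of
        None \<Rightarrow> None
      | Some prev \<Rightarrow>
          (let s = t div k + 1;
               C = {c \<in> cands P m n. dict_less (pel P s) c \<and> c \<notin> set prev}
           in if C = {} then None else Some (prev @ [dict_min C])))"

definition succ :: "nat list set \<Rightarrow> nat \<Rightarrow> nat \<Rightarrow> nat \<Rightarrow> nat \<Rightarrow> nat \<Rightarrow> nat list" where
  "succ P m n k s r = the (succ_opt P m n k (s * k)) ! ((s - 1) * k + (r - 1))"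

definition succ_of :: "nat list set \<Rightarrow> nat \<Rightarrow> nat \<Rightarrow> nat \<Rightarrow> nat list \<Rightarrow> nat \<Rightarrow> nat list" where
  "succ_of Q m n k q r = succ Q m n k (pos Q q) r"

end

theory Submission
  imports Defs "HOL-Library.List_Lexorder" "HOL-Library.Sublist"
begin

(* Every word q of P ends in its last nonzero letter c followed by zeros, q = u c 0^e (the first
   letter a_{m-1} is nonzero). The successors of q are u a_j with j = m + (m - 1 - c) k + r - 1,
   1 <= r <= k. These k l words are distinct candidates lying above their origins; every other
   candidate is a one-letter word beyond all of them; and a candidate strictly between q and one of
   its successors is a successor either of q itself with smaller r or of a dictionary-larger word
   of P, hence taken earlier. So the greedy minimum picks exactly these words. Replacing p = u c 0^e by its
   children keeps the hypotheses on P; a child p a_j with j <> 0 has last nonzero letter a_j, while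
   p a_0 = u c 0^(e+1) has the same successors as p. *)

lemma is_prefix_iff_prefix: "is_prefix u v \<longleftrightarrow> prefix u v"
  unfolding is_prefix_def prefix_def ..

lemma strict_prefix_iff_Sublist_strict_prefix: "Defs.strict_prefix u v \<longleftrightarrow> Sublist.strict_prefix u v"
  unfolding Defs.strict_prefix_def Sublist.strict_prefix_def prefix_def by auto

lemma less_list_iff_dict:
  "u < (v::'a::ord list) \<longleftrightarrow> (\<exists>a w. v = u @ a # w) \<or>
     (\<exists>p \<alpha> s \<beta> t. u = p @ \<alpha> # s \<and> v = p @ \<beta> # t \<and> \<alpha> < \<beta>)"
  unfolding list_less_def lexord_def by blast

lemma dict_le_iff_less_eq: "dict_le u v \<longleftrightarrow> u \<le> v"
proof -
  have "is_prefix u v \<longleftrightarrow> u = v \<or> (\<exists>a w. v = u @ a # w)"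
    unfolding is_prefix_def by (metis append_Nil2 neq_Nil_conv)
  then show ?thesis
    unfolding dict_le_def list_le_def less_list_iff_dict by auto
qed

lemma dict_less_iff_less: "dict_less u v \<longleftrightarrow> u < v"
  unfolding dict_less_def dict_le_iff_less_eq by auto

lemma append_Cons_less_append_Cons: "(a::'a::ord) < b \<Longrightarrow> z @ a # s < z @ b # t"
  by (simp add: list_less_def lexord_append_left_rightI)

lemma append_less_append_iff: "u @ xs < u @ (ys::'a::order list) \<longleftrightarrow> xs < ys"
  by (simp add: list_less_def lexord_same_pref_iff)

lemma dict_min_eqI: "c \<in> C \<Longrightarrow> (\<And>d. d \<in> C \<Longrightarrow> c \<le> d) \<Longrightarrow> dict_min C = c"
  unfolding dict_min_def dict_le_iff_less_eq by (rule the_equality) (auto intro: order.antisym)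

definition succ_letter :: "nat \<Rightarrow> nat \<Rightarrow> nat \<Rightarrow> nat \<Rightarrow> nat" where
  "succ_letter m k c r = m + (m - 1 - c) * k + r - 1"

(* The r-th successor u a_(succ_letter m k c r) of q = u c 0^e with c <> 0; reversing q brings c
   to the front once the zeros are dropped. All-zero words get the junk value []. *)
definition succ_word :: "nat \<Rightarrow> nat \<Rightarrow> nat list \<Rightarrow> nat \<Rightarrow> nat list" where
  "succ_word m k q r =
     (case dropWhile ((=) 0) (rev q) of [] \<Rightarrow> [] | c # v \<Rightarrow> rev v @ [succ_letter m k c r])"

lemma succ_word_eq:
  assumes "c \<noteq> 0"
  shows "succ_word m k (u @ c # replicate e 0) r = u @ [succ_letter m k c r]"
proof -
  from assms have "dropWhile ((=) 0) (replicate e 0 @ c # rev u) = c # rev u"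
    by (induct e) auto
  then show ?thesis by (simp add: succ_word_def)
qed

lemma succ_word_snoc_zero: "succ_word m k (q @ [0]) r = succ_word m k q r"
  by (simp add: succ_word_def)

lemma trailing_zeros_decomp:
  assumes "x \<in> set q" "x \<noteq> (0::nat)"
  shows "\<exists>u c e. q = u @ c # replicate e 0 \<and> c \<noteq> 0"
  using assms
proof (induction q rule: rev_induct)
  case Nil then show ?case by simp
next
  case (snoc y q)
  show ?case
  proof (cases "y = 0")
    case True
    with snoc obtain u c e where "q = u @ c # replicate e 0" "c \<noteq> 0" by auto
    with True show ?thesis
      by (intro exI[of _ u] exI[of _ c] exI[of _ "Suc e"]) (simp add: replicate_append_same)
  next
    case False
    then show ?thesis by (intro exI[of _ q] exI[of _ y] exI[of _ 0]) simp
  qed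
qed

lemma nonzero_letter_before_trailing_zeros:
  assumes "q = u @ c # replicate e 0" "q = z @ b # s" "b \<noteq> (0::nat)"
  shows "length z \<le> length u"
proof (rule ccontr)
  assume "\<not> length z \<le> length u"
  moreover have "length z < length q" using assms(2) by simp
  ultimately have "q ! length z = 0" using assms(1) by (simp add: nth_append nth_Cons')
  then show False using assms(2,3) by simp
qed

lemma prefix_append_replicate:
  assumes "prefix c (v @ replicate N x)" "length v \<le> length c"
  shows "c = v @ replicate (length c - length v) x"
proof -
  from assms(1) obtain zs where "v @ replicate N x = c @ zs" by (auto simp: prefix_def)
  then have "c = take (length c) (v @ replicate N x)" by simp
  moreover have "length c \<le> length v + N" using prefix_length_le[OF assms(1)] by simp
  ultimately show ?thesis using assms(2) by (simp add: min_absorb1)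
qed

lemma succ_letter_ge: "1 \<le> r \<Longrightarrow> m \<le> succ_letter m k c r"
  unfolding succ_letter_def by simp

lemma succ_letter_less:
  assumes "1 \<le> c" "c < m" "1 \<le> r" "r \<le> k"
  shows "succ_letter m k c r < m + k * (m - 1)"
proof -
  have "(m - 1 - c + 1) * k \<le> (m - 1) * k" using assms by (intro mult_le_mono1) linarith
  then show ?thesis using assms unfolding succ_letter_def by (simp add: algebra_simps)
qed

lemma succ_letter_less_succ_letter:
  assumes "c' < c" "c < m" "1 \<le> r'" "1 \<le> r" "r \<le> k"
  shows "succ_letter m k c r < succ_letter m k c' r'"
proof -
  have "(m - 1 - c + 1) * k \<le> (m - 1 - c') * k" using assms by (intro mult_le_mono1) linarith
  then show ?thesis using assms unfolding succ_letter_def by (simp add: algebra_simps)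
qed

lemma succ_letter_inject:
  assumes "c < m" "c' < m" "1 \<le> r" "r \<le> k" "1 \<le> r'" "r' \<le> k"
    and "succ_letter m k c r = succ_letter m k c' r'"
  shows "c = c' \<and> r = r'"
proof -
  have "c = c'"
    using succ_letter_less_succ_letter[of c' c m r' r k] succ_letter_less_succ_letter[of c c' m r r' k]
      assms by (metis less_irrefl neqE)
  with assms show ?thesis unfolding succ_letter_def by simp
qed

lemma succ_letter_surj:
  assumes "0 < k" "m \<le> j" "j < m + k * (m - 1)"
  obtains c r where "1 \<le> c" "c < m" "1 \<le> r" "r \<le> k" "j = succ_letter m k c r"
proof
  define t where "t = j - m"
  have t: "t div k < m - 1"
    using assms by (simp add: t_def less_mult_imp_div_less mult.commute)
  then show "1 \<le> m - 1 - t div k" "m - 1 - t div k < m" by simp_all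
  show "1 \<le> t mod k + 1" "t mod k + 1 \<le> k" using assms(1) by (simp_all add: Suc_leI)
  have "j = m + t div k * k + t mod k" using assms(2) by (simp add: t_def)
  with t show "j = succ_letter m k (m - 1 - t div k) (t mod k + 1)"
    by (simp add: succ_letter_def)
qed

lemma prefix_free_expand:
  assumes free: "\<And>u v. u \<in> C \<Longrightarrow> v \<in> C \<Longrightarrow> \<not> Sublist.strict_prefix u v" and c: "c \<in> C"
    and "u \<in> (C - {c}) \<union> {c @ [j] | j. j < m}" "v \<in> (C - {c}) \<union> {c @ [j] | j. j < m}"
  shows "\<not> Sublist.strict_prefix u v"
proof
  assume uv: "Sublist.strict_prefix u v"
  from assms(3,4) consider "u \<in> C" "v \<in> C" | "u \<in> C" "u \<noteq> c" "\<exists>j. v = c @ [j]"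
    | "\<exists>j. u = c @ [j]" "v \<in> C" | "\<exists>j. u = c @ [j]" "\<exists>j. v = c @ [j]" by blast
  then show False
  proof cases
    case 1
    then show False using free uv by blast
  next
    case 2
    then obtain j where "v = c @ [j]" by blast
    with uv have "prefix u c" by (auto simp: prefix_order.less_le prefix_snoc)
    with 2 have "Sublist.strict_prefix u c" by (simp add: prefix_order.less_le)
    with free[OF 2(1) c] show False ..
  next
    case 3
    then obtain j where "u = c @ [j]" by blast
    then have "Sublist.strict_prefix c v" using prefix_order.le_less_trans[OF prefixI uv] by blast
    with free[OF c 3(2)] show False ..
  next
    case 4
    then show False using prefix_length_less[OF uv] by auto
  qed
qed

lemma prefix_complete_expand:
  assumes d: "d \<in> C" "prefix d w \<or> prefix w d" and m: "0 < m" and w: "w \<in> words m"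
  shows "\<exists>d\<in>(C - {c}) \<union> {c @ [j] | j. j < m}. prefix d w \<or> prefix w d"
proof (cases "d = c")
  case False
  then show ?thesis using d by blast
next
  case True
  show ?thesis
  proof (cases "prefix w c")
    case True
    then show ?thesis using m by (intro bexI[of _ "c @ [0]"]) auto
  next
    case False
    with d \<open>d = c\<close> obtain z where "w = c @ z" "z \<noteq> []" by (auto simp: prefix_def)
    then obtain j z' where wj: "w = c @ j # z'" by (cases z) auto
    then have "j < m" using w by (auto simp: words_def)
    then show ?thesis using wj by (intro bexI[of _ "c @ [j]"]) auto
  qed
qed

lemma complete_prefix_code_expand:
  assumes C: "complete_prefix_code m C" and m: "0 < m" and c: "c \<in> C"
  shows "complete_prefix_code m ((C - {c}) \<union> {c @ [j] | j. j < m})"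
proof -
  from C have words: "C \<subseteq> words m"
    and free: "\<And>u v. u \<in> C \<Longrightarrow> v \<in> C \<Longrightarrow> \<not> Sublist.strict_prefix u v"
    and complete: "\<And>w. w \<in> words m \<Longrightarrow> \<exists>d\<in>C. prefix d w \<or> prefix w d"
    by (simp_all add: complete_prefix_code_def prefix_code_def
        strict_prefix_iff_Sublist_strict_prefix is_prefix_iff_prefix)
  let ?C' = "(C - {c}) \<union> {c @ [j] | j. j < m}"
  have "set c \<subseteq> {0..<m}" using words c by (auto simp: words_def)
  then have "?C' \<subseteq> words m" using words unfolding words_def by auto
  moreover have "\<forall>u\<in>?C'. \<forall>v\<in>?C'. \<not> Sublist.strict_prefix u v"
    using prefix_free_expand[OF free c] by blast
  moreover have "\<exists>d\<in>?C'. prefix d w \<or> prefix w d" if "w \<in> words m" for w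
    using complete[OF that] prefix_complete_expand[OF _ _ m that] by blast
  ultimately show ?thesis
    by (simp add: complete_prefix_code_def prefix_code_def
        strict_prefix_iff_Sublist_strict_prefix is_prefix_iff_prefix)
qed

definition rooted_code :: "nat \<Rightarrow> nat list set \<Rightarrow> bool" where
  "rooted_code m Q \<longleftrightarrow> finite Q \<and> Q \<subseteq> {(m - 1) # w | w. w \<in> words m} \<and>
     complete_prefix_code m {w. (m - 1) # w \<in> Q}"

lemma rooted_code_finite: "rooted_code m Q \<Longrightarrow> finite Q"
  unfolding rooted_code_def by simp

lemma rooted_code_word:
  "rooted_code m Q \<Longrightarrow> q \<in> Q \<Longrightarrow> \<exists>w. q = (m - 1) # w \<and> set w \<subseteq> {0..<m}"
  unfolding rooted_code_def words_def by blast

lemma rooted_code_letters: "rooted_code m Q \<Longrightarrow> 0 < m \<Longrightarrow> q \<in> Q \<Longrightarrow> set q \<subseteq> {0..<m}"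
  using rooted_code_word by fastforce

lemma rooted_code_prefix_eq:
  assumes "rooted_code m Q" "p \<in> Q" "p' \<in> Q" "prefix p p'"
  shows "p = p'"
proof -
  obtain w w' where w: "p = (m - 1) # w" "p' = (m - 1) # w'"
    using rooted_code_word assms by metis
  have "\<not> Sublist.strict_prefix w w'"
    using assms w unfolding rooted_code_def complete_prefix_code_def prefix_code_def
      strict_prefix_iff_Sublist_strict_prefix by blast
  then show ?thesis using assms(4) w by (simp add: prefix_order.less_le)
qed

lemma rooted_code_complete:
  "rooted_code m Q \<Longrightarrow> w \<in> words m \<Longrightarrow> \<exists>c. (m - 1) # c \<in> Q \<and> (prefix c w \<or> prefix w c)"
  unfolding rooted_code_def complete_prefix_code_def is_prefix_iff_prefix by auto

lemma rooted_code_decomp: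
  assumes "rooted_code m Q" "2 \<le> m" "q \<in> Q"
  shows "\<exists>u c e. q = u @ c # replicate e 0 \<and> 0 < c \<and> c < m"
proof -
  obtain w where w: "q = (m - 1) # w" "set w \<subseteq> {0..<m}"
    using rooted_code_word assms(1,3) by blast
  then obtain u c e where "q = u @ c # replicate e 0" "c \<noteq> 0"
    using trailing_zeros_decomp[of "m - 1" q] assms(2) by auto
  moreover have "set q \<subseteq> {0..<m}" using rooted_code_letters assms by simp
  ultimately show ?thesis by auto
qed

lemma rooted_code_expand:
  assumes Q: "rooted_code m Q" and m: "0 < m" and p: "p \<in> Q"
  shows "rooted_code m ((Q - {p}) \<union> {p @ [j] | j. j < m})"
proof -
  obtain p' where p': "p = (m - 1) # p'" "set p' \<subseteq> {0..<m}"
    using rooted_code_word[OF Q p] by blast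
  let ?C = "{w. (m - 1) # w \<in> Q}"
  have "{w. (m - 1) # w \<in> (Q - {p}) \<union> {p @ [j] | j. j < m}} = (?C - {p'}) \<union> {p' @ [j] | j. j < m}"
    using p' by auto
  moreover have "complete_prefix_code m ((?C - {p'}) \<union> {p' @ [j] | j. j < m})"
    using Q m p p' by (intro complete_prefix_code_expand) (auto simp: rooted_code_def)
  moreover have "(Q - {p}) \<union> {p @ [j] | j. j < m} \<subseteq> {(m - 1) # w | w. w \<in> words m}"
    using Q p' unfolding rooted_code_def words_def by auto
  ultimately show ?thesis using Q unfolding rooted_code_def by simp
qed

lemma rooted_code_extend:
  assumes Q: "rooted_code m Q" and x: "x \<in> spref Q" and b: "b < m"
    and root: "x = [] \<Longrightarrow> b = m - 1"
  shows "\<exists>e. x @ b # replicate e 0 \<in> Q"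
proof -
  obtain p where p: "p \<in> Q" "Sublist.strict_prefix x p"
    using x unfolding spref_def strict_prefix_iff_Sublist_strict_prefix by blast
  obtain w where w: "p = (m - 1) # w" "set w \<subseteq> {0..<m}" using rooted_code_word[OF Q p(1)] by blast
  obtain v where v: "x @ [b] = (m - 1) # v" "v \<in> words m"
  proof (cases x)
    case Nil then show ?thesis using that root b by (auto simp: words_def)
  next
    case (Cons y x')
    then have "y = m - 1" "set x' \<subseteq> set w"
      using p(2) w by (auto simp: prefix_order.less_le dest: set_mono_prefix)
    then show ?thesis using that[of "x' @ [b]"] Cons b w by (auto simp: words_def)
  qed
  \<comment> \<open>Completeness applied to x b 0^N, which is longer than every code word.\<close>
  define N where "N = Max (length ` Q)"
  have "v @ replicate N 0 \<in> words m" using v b by (auto simp: words_def)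
  then obtain c where c: "(m - 1) # c \<in> Q" "prefix c (v @ replicate N 0) \<or> prefix (v @ replicate N 0) c"
    using rooted_code_complete[OF Q] by blast
  have "length ((m - 1) # c) \<le> N"
    unfolding N_def by (intro Max_ge finite_imageI rooted_code_finite[OF Q] imageI c(1))
  then have c_pref: "prefix c (v @ replicate N 0)" using c(2) prefix_length_le by fastforce
  show ?thesis
  proof (cases "length v \<le> length c")
    case True
    then have "(m - 1) # c = x @ b # replicate (length c - length v) 0"
      using prefix_append_replicate[OF c_pref] v(1) by (metis Cons_eq_appendI append.assoc append_Cons append_Nil)
    then show ?thesis using c(1) by metis
  next
    case False
    have "prefix c v" using c_pref False by (intro prefix_length_prefix[of c "v @ replicate N 0" v]) auto
    then have "prefix ((m - 1) # c) (x @ [b])" using v(1) by simp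
    moreover have "length ((m - 1) # c) \<le> length x" using False arg_cong[OF v(1), of length] by simp
    moreover have "prefix x (x @ [b])" by simp
    ultimately have cx: "prefix ((m - 1) # c) x" by (metis prefix_length_prefix)
    then have "prefix ((m - 1) # c) p" using prefix_order.less_imp_le[OF p(2)] by (rule prefix_order.trans)
    then have "(m - 1) # c = p" using rooted_code_prefix_eq[OF Q c(1) p(1)] by blast
    then show ?thesis using cx p(2) by (metis prefix_order.le_less_trans prefix_order.less_irrefl)
  qed
qed

lemma rooted_code_first_difference:
  assumes Q: "rooted_code m Q" and "q' \<in> Q" "q \<in> Q" "q' < q"
  obtains z a b s s' where "a < b" "q' = z @ a # s'" "q = z @ b # s"
proof -
  have "\<not> prefix q' q" "\<not> prefix q q'"
    using rooted_code_prefix_eq[OF Q assms(2,3)] rooted_code_prefix_eq[OF Q assms(3,2)] assms(4)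
    by auto
  then have "q' \<parallel> q" by (rule parallelI)
  then obtain z a b s s' where Z: "a \<noteq> b" "q' = z @ a # s'" "q = z @ b # s"
    using parallel_decomp by blast
  then have "a < b"
    using assms(4) append_Cons_less_append_Cons[of b a z s s'] by (metis linorder_neq_iff order.asym)
  with Z that show ?thesis by blast
qed

lemma pos_eq_card: "pos Q q = card {x \<in> Q. q < x} + 1"
  unfolding pos_def dict_less_iff_less ..

lemma pos_bounds:
  assumes "finite Q" "q \<in> Q"
  shows "1 \<le> pos Q q \<and> pos Q q \<le> card Q"
proof -
  have "card {x \<in> Q. q < x} < card Q"
    using assms by (intro psubset_card_mono) auto
  then show ?thesis unfolding pos_eq_card by simp
qed

lemma pos_strict_antimono:
  assumes "finite Q" "q \<in> Q" "q' \<in> Q" "q < q'"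
  shows "pos Q q' < pos Q q"
proof -
  have "{x \<in> Q. q' < x} \<subset> {x \<in> Q. q < x}" using assms by auto
  then have "card {x \<in> Q. q' < x} < card {x \<in> Q. q < x}"
    using assms(1) by (intro psubset_card_mono) auto
  then show ?thesis unfolding pos_eq_card by simp
qed

lemma inj_on_pos: "finite Q \<Longrightarrow> inj_on (pos Q) Q"
  by (rule inj_onI) (metis linorder_neq_iff pos_strict_antimono less_irrefl)

lemma pos_image: assumes "finite Q" shows "pos Q ` Q = {1..card Q}"
proof -
  have "pos Q ` Q \<subseteq> {1..card Q}" using pos_bounds[OF assms] by auto
  moreover have "card (pos Q ` Q) = card {1..card Q}"
    using card_image[OF inj_on_pos[OF assms]] by simp
  ultimately show ?thesis by (intro card_subset_eq) auto
qed

lemma pel_mem_pos: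
  assumes "finite Q" "1 \<le> s" "s \<le> card Q"
  shows "pel Q s \<in> Q \<and> pos Q (pel Q s) = s"
proof -
  have "s \<in> pos Q ` Q" using pos_image[OF assms(1)] assms(2,3) by simp
  then have "\<exists>!p. p \<in> Q \<and> pos Q p = s" using inj_on_pos[OF assms(1)] by (auto simp: inj_on_def)
  then show ?thesis unfolding pel_def by (rule theI')
qed

lemma pel_pos: "finite Q \<Longrightarrow> q \<in> Q \<Longrightarrow> pel Q (pos Q q) = q"
  using pel_mem_pos[of Q "pos Q q"] pos_bounds[of Q q] inj_on_pos[of Q]
  by (auto simp: inj_on_def)

definition succ_enum :: "nat \<Rightarrow> nat \<Rightarrow> nat list set \<Rightarrow> nat \<Rightarrow> nat list" where
  "succ_enum m k Q t = succ_word m k (pel Q (t div k + 1)) (t mod k + 1)"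

lemma enum_index_div_mod:
  assumes "1 \<le> r" "r \<le> (k::nat)"
  shows "((s - 1) * k + (r - 1)) div k = s - 1 \<and> ((s - 1) * k + (r - 1)) mod k = r - 1"
proof -
  have "k \<noteq> 0" using assms by simp
  then have "((r - 1) + (s - 1) * k) div k = (s - 1) + (r - 1) div k" by (rule div_mult_self1)
  moreover have "((r - 1) + (s - 1) * k) mod k = (r - 1) mod k" by simp
  ultimately show ?thesis using assms by (simp add: add.commute)
qed

lemma enum_index_bound:
  assumes "1 \<le> s" "1 \<le> r" "r \<le> (k::nat)"
  shows "(s - 1) * k + (r - 1) < s * k"
proof -
  have "(s - 1) * k + k = s * k" using assms(1) by (cases s) auto
  then show ?thesis using assms(2,3) by linarith
qed

lemma enum_index_less:
  assumes "1 \<le> s'" "1 \<le> r'" "r' \<le> k" "1 \<le> r" and "s' < s \<or> (s' = s \<and> r' < r)"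
  shows "(s' - 1) * k + (r' - 1) < (s - 1) * (k::nat) + (r - 1)"
proof (cases "s' < s")
  case True
  then have "s' * k \<le> (s - 1) * k" by (intro mult_le_mono1) simp
  then show ?thesis using enum_index_bound[OF assms(1-3)] by linarith
next
  case False
  then show ?thesis using assms by auto
qed

context
  fixes m n k :: nat and Q :: "nat list set"
  assumes Q: "rooted_code m Q" and m: "2 \<le> m" and k: "0 < k" and n: "n = m + k * (m - 1)"
begin

lemma succ_word_cand:
  assumes "q \<in> Q" "1 \<le> r" "r \<le> k"
  shows "succ_word m k q r \<in> cands Q m n \<and> q < succ_word m k q r"
proof -
  obtain u c e where q: "q = u @ c # replicate e 0" "0 < c" "c < m"
    using rooted_code_decomp[OF Q m assms(1)] by blast
  have "u \<in> spref Q"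
    using q(1) assms(1) unfolding spref_def Defs.strict_prefix_def by blast
  moreover have "m \<le> succ_letter m k c r" "succ_letter m k c r < n"
    using succ_letter_ge succ_letter_less[of c m r k] q assms n by auto
  moreover have "q < u @ [succ_letter m k c r]"
    using q(1,3) succ_letter_ge[OF assms(2), of m k c] by (simp add: append_Cons_less_append_Cons)
  ultimately show ?thesis using q by (auto simp: succ_word_eq cands_def)
qed

lemma succ_word_inj:
  assumes "q \<in> Q" "q' \<in> Q" "1 \<le> r" "r \<le> k" "1 \<le> r'" "r' \<le> k"
    and eq: "succ_word m k q r = succ_word m k q' r'"
  shows "q = q' \<and> r = r'"
proof -
  obtain u c e where q: "q = u @ c # replicate e 0" "0 < c" "c < m"
    using rooted_code_decomp[OF Q m assms(1)] by blast
  obtain u' c' e' where q': "q' = u' @ c' # replicate e' 0" "0 < c'" "c' < m"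
    using rooted_code_decomp[OF Q m assms(2)] by blast
  have "u = u'" "succ_letter m k c r = succ_letter m k c' r'"
    using eq q q' by (simp_all add: succ_word_eq)
  then have "u = u'" "c = c'" "r = r'" using succ_letter_inject q q' assms(3-6) by blast+
  moreover have "prefix (replicate e 0) (replicate e' (0::nat)) \<or> prefix (replicate e' 0) (replicate e 0)"
    by (metis le_add_diff_inverse nle_le prefixI replicate_add)
  ultimately have "prefix q q' \<or> prefix q' q" using q q' by auto
  then show ?thesis
    using rooted_code_prefix_eq[OF Q assms(1,2)] rooted_code_prefix_eq[OF Q assms(2,1)] \<open>r = r'\<close>
    by auto
qed

lemma succ_word_less_succ_word:
  assumes q': "q' \<in> Q" and q: "q \<in> Q" and "q' < q"
    and r: "1 \<le> r" "r \<le> k" and r': "1 \<le> r'" "r' \<le> k"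
    and above: "q < succ_word m k q' r'"
  shows "succ_word m k q r < succ_word m k q' r'"
proof -
  obtain u c e where U: "q = u @ c # replicate e 0" "0 < c" "c < m"
    using rooted_code_decomp[OF Q m q] by blast
  obtain u' c' e' where U': "q' = u' @ c' # replicate e' 0" "0 < c'" "c' < m"
    using rooted_code_decomp[OF Q m q'] by blast
  define d d' where "d = succ_letter m k c r" and "d' = succ_letter m k c' r'"
  have S: "succ_word m k q r = u @ [d]" "succ_word m k q' r' = u' @ [d']"
    using U U' by (simp_all add: succ_word_eq d_def d'_def)
  have "m \<le> d'" using succ_letter_ge[OF r'(1)] by (simp add: d'_def)
  obtain z a b s s' where Z: "a < b" "q' = z @ a # s'" "q = z @ b # s"
    by (rule rooted_code_first_difference[OF Q q' q \<open>q' < q\<close>])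
  have "length z \<le> length u"
    using nonzero_letter_before_trailing_zeros[OF U(1) Z(3)] Z(1) by simp
  have pu: "prefix u q" "prefix (u' @ [c']) q'" "prefix z q" "prefix z q'"
    using prefixI[OF U(1)] prefixI[of q' "u' @ [c']"] U'(1) prefixI[OF Z(3)] prefixI[OF Z(2)]
    by simp_all
  consider "length u' < length z" | "length u' = length z" | "length z < length u'" by linarith
  then show ?thesis
  proof cases
    case 1
    then have "prefix (u' @ [c']) z" using pu prefix_length_prefix by fastforce
    then have "prefix (u' @ [c']) u"
      using pu \<open>length z \<le> length u\<close> prefix_length_prefix prefix_length_le by (metis prefix_order.trans)
    then obtain w where "u = u' @ c' # w" by (auto simp: prefix_def)
    then show ?thesis using S U'(3) \<open>m \<le> d'\<close> by (simp add: append_Cons_less_append_Cons)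
  next
    case 2
    then have "u' = z" "a = c'" using pu U'(1) Z(2) prefix_length_prefix
      by (metis append_eq_append_conv list.inject)+
    show ?thesis
    proof (cases "length u = length z")
      case True
      then have "u = z" "b = c" using U(1) Z(3) by (metis append_eq_append_conv list.inject)+
      then have "d < d'"
        using succ_letter_less_succ_letter[of c' c m r' r k] Z(1) \<open>a = c'\<close> U(3) r r'
        by (simp add: d_def d'_def)
      then show ?thesis using S \<open>u = z\<close> \<open>u' = z\<close> by (simp add: append_Cons_less_append_Cons)
    next
      case False
      then have "prefix (z @ [b]) u"
        using pu \<open>length z \<le> length u\<close> Z(3) prefix_length_prefix[of "z @ [b]" q u] by simp
      then obtain w where "u = z @ b # w" by (auto simp: prefix_def)
      moreover have "b < d'" using rooted_code_letters[OF Q _ q] Z(3) m \<open>m \<le> d'\<close> by fastforce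
      ultimately show ?thesis using S \<open>u' = z\<close> by (simp add: append_Cons_less_append_Cons)
    qed
  next
    case 3
    moreover have "prefix (z @ [a]) q'" "prefix u' q'"
      using prefixI[of q' "z @ [a]" s'] Z(2) prefixI[OF U'(1)] by simp_all
    ultimately have "prefix (z @ [a]) u'" using prefix_length_prefix by fastforce
    then obtain w where "u' = z @ a # w" by (auto simp: prefix_def)
    then have "succ_word m k q' r' < q" using S Z(3) Z(1) by (simp add: append_Cons_less_append_Cons)
    then show ?thesis using above by simp
  qed
qed

lemma cands_cases:
  assumes "d \<in> cands Q m n"
  obtains (succ) q r where "q \<in> Q" "1 \<le> r" "r \<le> k" "d = succ_word m k q r"
    | (single) j where "d = [j]" "m + k \<le> j"
proof -
  obtain x j where x: "d = x @ [j]" "x \<in> spref Q" "m \<le> j" "j < n"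
    using assms unfolding cands_def by blast
  obtain c r where c: "1 \<le> c" "c < m" "1 \<le> r" "r \<le> k" "j = succ_letter m k c r"
    using succ_letter_surj[OF k x(3)] x(4) n by blast
  show ?thesis
  proof (cases "x = [] \<and> c \<noteq> m - 1")
    case True
    then have "1 \<le> m - 1 - c" using c(2) by linarith
    then have "k \<le> (m - 1 - c) * k" using mult_le_mono1[of 1 "m - 1 - c" k] by simp
    then have "m + k \<le> j" using c(3,5) unfolding succ_letter_def by linarith
    then show ?thesis using that(2) x(1) True by simp
  next
    case False
    then obtain e where "x @ c # replicate e 0 \<in> Q"
      using rooted_code_extend[OF Q x(2) c(2)] by blast
    moreover have "succ_word m k (x @ c # replicate e 0) r = d"
      using c x(1) by (simp add: succ_word_eq)
    ultimately show ?thesis using that(1) c by blast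
  qed
qed

lemma cand_below_succ_word:
  assumes q: "q \<in> Q" and r: "1 \<le> r" "r \<le> k"
    and d: "d \<in> cands Q m n" "q < d" "d < succ_word m k q r"
  obtains q' r' where "q' \<in> Q" "1 \<le> r'" "r' \<le> k" "d = succ_word m k q' r'"
    "q < q' \<or> (q' = q \<and> r' < r)"
proof -
  obtain u c e where U: "q = u @ c # replicate e 0" "0 < c" "c < m"
    using rooted_code_decomp[OF Q m q] by blast
  have S: "succ_word m k q r = u @ [succ_letter m k c r]" using U by (simp add: succ_word_eq)
  from d(1) show ?thesis
  proof (cases rule: cands_cases)
    case (succ q' r')
    consider (same) "q' = q" | (earlier) "q < q'" | (later) "q' < q" by fastforce
    then show ?thesis
    proof cases
      case same
      then have "succ_letter m k c r' < succ_letter m k c r"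
        using d(3) succ U by (simp add: succ_word_eq append_less_append_iff)
      then have "r' < r" using succ(2) r by (simp add: succ_letter_def)
      then show ?thesis using that succ same by blast
    next
      case earlier
      then show ?thesis using that succ by blast
    next
      case later
      then have "succ_word m k q r < d"
        using succ_word_less_succ_word[OF succ(1) q later r succ(2,3)] d(2) succ(4) by simp
      then show ?thesis using d(3) by simp
    qed
  next
    case (single j)
    obtain w where w: "q = (m - 1) # w" using rooted_code_word[OF Q q] by blast
    have "succ_word m k q r < [j]"
    proof (cases u)
      case Nil
      then have "succ_letter m k c r < j"
        using U(1) w single r by (simp add: succ_letter_def)
      then show ?thesis using S Nil by simp
    next
      case (Cons y u')
      then have "y = m - 1" using U(1) w by simp
      then have "y < j" using single m by linarith
      then show ?thesis using S Cons by simp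
    qed
    then show ?thesis using d(3) single by simp
  qed
qed

lemma enum_index_cases:
  assumes "t < card Q * k"
  obtains q r where "q \<in> Q" "1 \<le> r" "r \<le> k" "t = (pos Q q - 1) * k + (r - 1)"
    "pel Q (t div k + 1) = q" "succ_enum m k Q t = succ_word m k q r"
proof
  have "t div k < card Q" using assms by (simp add: less_mult_imp_div_less)
  then show q: "pel Q (t div k + 1) \<in> Q" "t = (pos Q (pel Q (t div k + 1)) - 1) * k + (t mod k + 1 - 1)"
    using pel_mem_pos[OF rooted_code_finite[OF Q], of "t div k + 1"] by simp_all
  show "1 \<le> t mod k + 1" "t mod k + 1 \<le> k" using k by (simp_all add: Suc_leI)
qed (simp_all add: succ_enum_def)

lemma succ_enum_index:
  assumes "q \<in> Q" "1 \<le> r" "r \<le> k"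
  shows "succ_enum m k Q ((pos Q q - 1) * k + (r - 1)) = succ_word m k q r"
  using assms enum_index_div_mod[OF assms(2,3)] pos_bounds[OF rooted_code_finite[OF Q] assms(1)]
    pel_pos[OF rooted_code_finite[OF Q] assms(1)] by (simp add: succ_enum_def)

lemma inj_on_succ_enum: "inj_on (succ_enum m k Q) {..<card Q * k}"
proof (rule inj_onI)
  fix t t' assume "t \<in> {..<card Q * k}" "t' \<in> {..<card Q * k}"
    and eq: "succ_enum m k Q t = succ_enum m k Q t'"
  obtain q r where qr: "q \<in> Q" "1 \<le> r" "r \<le> k" "t = (pos Q q - 1) * k + (r - 1)"
      "succ_enum m k Q t = succ_word m k q r"
    using enum_index_cases \<open>t \<in> {..<card Q * k}\<close> by (metis lessThan_iff)
  obtain q' r' where q'r': "q' \<in> Q" "1 \<le> r'" "r' \<le> k" "t' = (pos Q q' - 1) * k + (r' - 1)"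
      "succ_enum m k Q t' = succ_word m k q' r'"
    using enum_index_cases \<open>t' \<in> {..<card Q * k}\<close> by (metis lessThan_iff)
  have "q = q' \<and> r = r'" using succ_word_inj[OF qr(1) q'r'(1) qr(2,3) q'r'(2,3)] eq qr(5) q'r'(5) by simp
  then show "t = t'" using qr(4) q'r'(4) by simp
qed

lemma succ_enum_below:
  assumes t: "t < card Q * k"
    and d: "d \<in> cands Q m n" "pel Q (t div k + 1) < d" "d < succ_enum m k Q t"
  shows "d \<in> succ_enum m k Q ` {..<t}"
proof -
  obtain q r where qr: "q \<in> Q" "1 \<le> r" "r \<le> k" "t = (pos Q q - 1) * k + (r - 1)"
    "pel Q (t div k + 1) = q" "succ_enum m k Q t = succ_word m k q r"
    using enum_index_cases[OF t] by blast
  obtain q' r' where q'r': "q' \<in> Q" "1 \<le> r'" "r' \<le> k" "d = succ_word m k q' r'"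
    "q < q' \<or> (q' = q \<and> r' < r)"
    using cand_below_succ_word[OF qr(1-3) d(1)] d(2,3) qr(5,6) by metis
  have fin: "finite Q" using rooted_code_finite[OF Q] .
  have "pos Q q' < pos Q q \<or> (pos Q q' = pos Q q \<and> r' < r)"
    using q'r'(5) pos_strict_antimono[OF fin qr(1) q'r'(1)] by auto
  then have "(pos Q q' - 1) * k + (r' - 1) < t"
    using enum_index_less[of "pos Q q'" r' k r "pos Q q"] pos_bounds[OF fin q'r'(1)] q'r'(2,3) qr(2,4)
    by simp
  moreover have "d = succ_enum m k Q ((pos Q q' - 1) * k + (r' - 1))"
    using succ_enum_index[OF q'r'(1-3)] q'r'(4) by simp
  ultimately show ?thesis by blast
qed

lemma succ_opt_eq_succ_enum:
  "t \<le> card Q * k \<Longrightarrow> succ_opt Q m n k t = Some (map (succ_enum m k Q) [0..<t])"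
proof (induction t)
  case 0
  show ?case by simp
next
  case (Suc t)
  then have t: "t < card Q * k" by simp
  let ?C = "{c \<in> cands Q m n. dict_less (pel Q (t div k + 1)) c \<and>
      c \<notin> set (map (succ_enum m k Q) [0..<t])}"
  obtain q r where qr: "q \<in> Q" "1 \<le> r" "r \<le> k"
    "pel Q (t div k + 1) = q" "succ_enum m k Q t = succ_word m k q r"
    using enum_index_cases[OF t] by blast
  have "succ_enum m k Q t \<notin> set (map (succ_enum m k Q) [0..<t])"
  proof
    assume "succ_enum m k Q t \<in> set (map (succ_enum m k Q) [0..<t])"
    then obtain t' where "t' < t" "succ_enum m k Q t = succ_enum m k Q t'" by auto
    then show False using inj_onD[OF inj_on_succ_enum, of t t'] t by simp
  qed
  then have mem: "succ_enum m k Q t \<in> ?C"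
    using succ_word_cand[OF qr(1-3)] qr(4,5) by (simp add: dict_less_iff_less)
  have "dict_min ?C = succ_enum m k Q t"
  proof (rule dict_min_eqI[OF mem])
    fix d assume d: "d \<in> ?C"
    show "succ_enum m k Q t \<le> d"
    proof (rule ccontr)
      assume "\<not> succ_enum m k Q t \<le> d"
      then have "d \<in> succ_enum m k Q ` {..<t}"
        using succ_enum_below[OF t] d by (simp add: dict_less_iff_less not_le)
      then show False using d by (auto simp: atLeast0LessThan)
    qed
  qed
  with Suc mem show ?case by (auto simp: Let_def)
qed

lemma succ_of_eq_succ_word:
  assumes q: "q \<in> Q" and r: "1 \<le> r" "r \<le> k"
  shows "succ_opt Q m n k (pos Q q * k) \<noteq> None \<and> succ_of Q m n k q r = succ_word m k q r"
proof -
  have s: "1 \<le> pos Q q" "pos Q q \<le> card Q" using pos_bounds[OF rooted_code_finite[OF Q] q] by auto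
  then have opt: "succ_opt Q m n k (pos Q q * k) = Some (map (succ_enum m k Q) [0..<pos Q q * k])"
    by (intro succ_opt_eq_succ_enum) simp
  have "(pos Q q - 1) * k + (r - 1) < pos Q q * k"
    using enum_index_bound[OF s(1) r] .
  then show ?thesis
    using opt succ_enum_index[OF q r] by (simp add: succ_of_def succ_def)
qed

end

lemma succ_of_expand:
  assumes Q: "rooted_code m Q" and m: "2 \<le> m" and k: "0 < k" and n: "n = m + k * (m - 1)"
    and p: "p \<in> Q"
  defines "Qt \<equiv> (Q - {p}) \<union> {p @ [j] | j. j < m}"
  shows "j < m \<Longrightarrow> succ_opt Qt m n k (pos Qt (p @ [j]) * k) \<noteq> None"
    and "0 < j \<Longrightarrow> j < m \<Longrightarrow> 1 \<le> r \<Longrightarrow> r \<le> k \<Longrightarrow>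
      succ_of Qt m n k (p @ [j]) r = p @ [succ_letter m k j r]"
    and "1 \<le> r \<Longrightarrow> r \<le> k \<Longrightarrow> succ_of Qt m n k (p @ [0]) r = succ_of Q m n k p r"
proof -
  have Qt: "rooted_code m Qt" using rooted_code_expand[OF Q _ p] m by (simp add: Qt_def)
  have child: "p @ [j] \<in> Qt" if "j < m" for j using that by (auto simp: Qt_def)
  note succ_Qt = succ_of_eq_succ_word[OF Qt m k n child]
  show "succ_opt Qt m n k (pos Qt (p @ [j]) * k) \<noteq> None" if "j < m"
    using succ_Qt[OF that, of 1] k by simp
  show "succ_of Qt m n k (p @ [j]) r = p @ [succ_letter m k j r]"
    if "0 < j" "j < m" "1 \<le> r" "r \<le> k"
    using succ_Qt[OF that(2-4)] succ_word_eq[of j m k p 0 r] that(1) by simp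
  show "succ_of Qt m n k (p @ [0]) r = succ_of Q m n k p r" if "1 \<le> r" "r \<le> k"
    using succ_Qt[of 0 r] succ_of_eq_succ_word[OF Q m k n p that] m that
    by (simp add: succ_word_snoc_zero)
qed

theorem mainTheorem5:
  fixes m n k l i :: nat and P :: "nat list set"
  assumes "2 \<le> m" and "m \<le> n" and "n - m = k * (m - 1)"
    and "0 < l" and "l mod (m - 1) = m mod (m - 1)"
    and "finite P" and "card P = l"
    and "P \<subseteq> {(m - 1) # w | w. w \<in> words m}"
    and "complete_prefix_code m {w. (m - 1) # w \<in> P}"
    and "1 \<le> i" and "i \<le> l"
  shows "succ_opt P m n k (i * k) \<noteq> None \<and>
    (let p = pel P i;
         Pt = (P - {p}) \<union> {p @ [j] | j. j < m}
     in (\<forall>j<m. succ_opt Pt m n k (pos Pt (p @ [j]) * k) \<noteq> None)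
      \<and> (\<forall>j\<in>{1..m-1}. \<forall>r\<in>{1..k}.
            succ_of Pt m n k (p @ [j]) r = p @ [m + (m - 1 - j) * k + r - 1])
      \<and> (\<forall>r\<in>{1..k}. succ_of Pt m n k (p @ [0]) r = succ P m n k i r))"
proof (cases "k = 0")
  case True
  then show ?thesis by (simp add: Let_def)
next
  case False
  then have k: "0 < k" by simp
  have n: "n = m + k * (m - 1)" using assms(2,3) by simp
  have P: "rooted_code m P" using assms(6,8,9) by (simp add: rooted_code_def)
  have p: "pel P i \<in> P" "pos P (pel P i) = i"
    using pel_mem_pos[OF assms(6)] assms(7,10,11) by simp_all
  note expand = succ_of_expand[OF P assms(1) k n p(1)]
  have "succ_opt P m n k (i * k) \<noteq> None"
    using succ_of_eq_succ_word[OF P assms(1) k n p(1), of 1] p(2) k by simp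
  moreover have "succ P m n k i r = succ_of P m n k (pel P i) r" for r
    using p(2) by (simp add: succ_of_def)
  moreover have "0 < j \<and> j < m" if "j \<in> {1..m-1}" for j using that assms(1) by auto
  ultimately show ?thesis
    using expand by (simp add: Let_def succ_letter_def)
qed

end
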